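(* Let $\Omega\subset\mathbb{R}^d$, let $\Psi$ be a stationary positive definite correlation function with $c_1(1+\|\omega\|_2^2)^{-m_0}\le\mathcal{F}(\Psi)(\omega)\le c_2(1+\|\omega\|_2^2)^{-m_0}$ for all $\omega$ ($m_0>d/2$), and $Z\sim GP(0,\sigma^2\Psi)$. Assume there exist a stationary correlation function $K$ with $c_5(1+\|\omega\|_2^2)^{-m_0}\le\mathcal{F}(K)(\omega)\le c_6(1+\|\omega\|_2^2)^{-m_0}$ and a constant $A_0>0$ such that $\|\mathcal{F}(K)/\mathcal{F}(\Psi)\|_{L_\infty(\mathbb{R}^d)}\le A_0$, and such that in the Mercer expansion $K(x-y)=\sum_k\lambda_k\varphi_k(x)\varphi_k(y)$ on $\Omega$ ($\{\varphi_k\}$ an orthonormal basis of $L_2(\Omega)$, $\lambda_k>0$) one has $\|\varphi_k\|_{L_\infty(\Omega)}\le C$ for all $k$. Let $\{x_1,\dots,x_n\}\subset\Omega$ be design points, $\mu=\sigma_\epsilon^2/\sigma^2>0$, $r(x)=(\Psi(x-x_j))_j$, $R=(\Psi(x_j-x_k))_{jk}$, and $$\mathrm{Var}[Z(x)\mid Y]=\sigma^2\big(\Psi(x-x)-r(x)^T(R+\mu I_n)^{-1}r(x)\big).$$ Then for all $x\in\Omega$, $$\mathrm{Var}[Z(x)\mid Y]\gtrsim K(x-x)-r_K(x)^T(R_K+\mu I_n)^{-1}r_K(x),$$ where $R_K=(K(x_j-x_k))_{jk}$ and $r_K(x)=(K(x-x_1),\dots,K(x-x_n))^T$, and the implicit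 constant does not depend on $x$, $n$ or the design.
   Context: $\mathrm{Var}[Z(x)\mid Y]$ is the conditional variance of $Z(x)$ given noisy observations $Y=(Z(x_k)+\epsilon_k)_k$ with i.i.d. normal noise of variance $\sigma_\epsilon^2$, which equals the displayed formula. Fourier transform $\mathcal{F}(f)(\omega)=(2\pi)^{-d/2}\int f(x)e^{-ix^T\omega}dx$. *)

theory Defs
  imports "HOL-Analysis.Analysis" "Jordan_Normal_Form.Gauss_Jordan_Elimination"
begin

definition fourier :: "('a::euclidean_space \<Rightarrow> real) \<Rightarrow> 'a \<Rightarrow> complex" where
  "fourier f \<omega> = complex_of_real ((2 * pi) powr (- real DIM('a) / 2)) *
     (LINT x|lborel. complex_of_real (f x) * cis (- inner x \<omega>))"

definition correlation_function :: "('a::euclidean_space \<Rightarrow> real) \<Rightarrow> bool" where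
  "correlation_function \<Psi> \<longleftrightarrow> continuous_on UNIV \<Psi> \<and> \<Psi> 0 = 1 \<and> (\<forall>h. \<Psi> (- h) = \<Psi> h) \<and>
     (\<forall>n (xs :: nat \<Rightarrow> 'a) (c :: nat \<Rightarrow> real).
        (\<Sum>j<n. \<Sum>k<n. c j * c k * \<Psi> (xs j - xs k)) \<ge> 0)"

definition positive_definite_fun :: "('a::euclidean_space \<Rightarrow> real) \<Rightarrow> bool" where
  "positive_definite_fun \<Psi> \<longleftrightarrow>
     (\<forall>n (xs :: nat \<Rightarrow> 'a) (c :: nat \<Rightarrow> real).
        (\<forall>j<n. \<forall>k<n. j \<noteq> k \<longrightarrow> xs j \<noteq> xs k) \<and> (\<exists>j<n. c j \<noteq> 0) \<longrightarrow>
        (\<Sum>j<n. \<Sum>k<n. c j * c k * \<Psi> (xs j - xs k)) > 0)"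

definition L2_onb :: "'a::euclidean_space set \<Rightarrow> (nat \<Rightarrow> 'a \<Rightarrow> real) \<Rightarrow> bool" where
  "L2_onb \<Omega> \<phi> \<longleftrightarrow>
     (\<forall>k. \<phi> k \<in> borel_measurable (lebesgue_on \<Omega>) \<and>
          integrable (lebesgue_on \<Omega>) (\<lambda>x. (\<phi> k x)\<^sup>2)) \<and>
     (\<forall>j k. (LINT x|lebesgue_on \<Omega>. \<phi> j x * \<phi> k x) = (if j = k then 1 else 0)) \<and>
     (\<forall>f. f \<in> borel_measurable (lebesgue_on \<Omega>) \<and> integrable (lebesgue_on \<Omega>) (\<lambda>x. (f x)\<^sup>2) \<and>
          (\<forall>k. (LINT x|lebesgue_on \<Omega>. f x * \<phi> k x) = 0)
          \<longrightarrow> (AE x in lebesgue_on \<Omega>. f x = 0))"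

definition kmat :: "('a::euclidean_space \<Rightarrow> real) \<Rightarrow> nat \<Rightarrow> (nat \<Rightarrow> 'a) \<Rightarrow> real mat" where
  "kmat \<Psi> n xs = mat n n (\<lambda>(j, k). \<Psi> (xs j - xs k))"

definition kvec :: "('a::euclidean_space \<Rightarrow> real) \<Rightarrow> nat \<Rightarrow> (nat \<Rightarrow> 'a) \<Rightarrow> 'a \<Rightarrow> real vec" where
  "kvec \<Psi> n xs x = vec n (\<lambda>j. \<Psi> (x - xs j))"

definition post_var_factor ::
    "('a::euclidean_space \<Rightarrow> real) \<Rightarrow> real \<Rightarrow> nat \<Rightarrow> (nat \<Rightarrow> 'a) \<Rightarrow> 'a \<Rightarrow> real" where
  "post_var_factor \<Psi> \<mu> n xs x =
     \<Psi> (x - x) - scalar_prod (kvec \<Psi> n xs x)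
        (the (mat_inverse (kmat \<Psi> n xs + \<mu> \<cdot>\<^sub>m 1\<^sub>m n)) *\<^sub>v kvec \<Psi> n xs x)"

definition cond_var ::
    "real \<Rightarrow> ('a::euclidean_space \<Rightarrow> real) \<Rightarrow> real \<Rightarrow> nat \<Rightarrow> (nat \<Rightarrow> 'a) \<Rightarrow> 'a \<Rightarrow> real" where
  "cond_var \<sigma> \<Psi> \<mu> n xs x = \<sigma>\<^sup>2 * post_var_factor \<Psi> \<mu> n xs x"

end

theory Submission
  imports Defs "Jordan_Normal_Form.Determinant" "HOL-Probability.Characteristic_Functions"
begin

text \<open>The posterior variance factor is the minimum, over weight vectors \<open>w\<close>, of the noisy
  prediction error \<open>E (Z x - \<Sum>i. w i * Z (xs i))\<^sup>2 + \<mu> * \<Sum>i. (w i)\<^sup>2\<close>, attained at the kriging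
  weights; the prediction error is a quadratic form of the covariance on the points \<open>x, xs 0, xs 1, ...\<close>.
  The spectral bounds give \<open>F(K) \<le> (c\<^sub>6 / c\<^sub>1) F(\<Psi>)\<close>, so \<open>(c\<^sub>6 / c\<^sub>1) \<Psi> - K\<close> has a nonnegative
  Fourier transform and is positive semidefinite by the easy half of Bochner's theorem (proved with a
  Gaussian approximate identity). Hence every quadratic form of \<open>K\<close> is at most \<open>A = max 1 (c\<^sub>6 / c\<^sub>1)\<close>
  times the one of \<open>\<Psi>\<close>, and evaluating the error for \<open>K\<close> at the kriging weights of \<open>\<Psi>\<close> yields
  the claim with constant \<open>\<sigma>\<^sup>2 / A\<close>.\<close>

section \<open>Kriging variance as a minimal prediction error\<close>

definition quad_form :: "('a::euclidean_space \<Rightarrow> real) \<Rightarrow> nat \<Rightarrow> (nat \<Rightarrow> 'a) \<Rightarrow> (nat \<Rightarrow> real) \<Rightarrow> real" where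
  "quad_form \<Phi> n p a = (\<Sum>j<n. \<Sum>k<n. a j * a k * \<Phi> (p j - p k))"

lemma correlation_functionD:
  assumes "correlation_function \<Phi>"
  shows "continuous_on UNIV \<Phi>" "\<Phi> 0 = 1" "\<Phi> (- h) = \<Phi> h" "quad_form \<Phi> n p a \<ge> 0"
  using assms unfolding correlation_function_def quad_form_def by auto

lemma correlation_function_abs_le_1:
  assumes "correlation_function \<Phi>"
  shows "\<bar>\<Phi> x\<bar> \<le> 1"
proof -
  have "0 \<le> 2 + 2 * s * \<Phi> x" if "s * s = 1" for s :: real
  proof -
    have "0 \<le> quad_form \<Phi> 2 (case_nat x (\<lambda>_. 0)) (case_nat 1 (\<lambda>_. s))"
      using assms by (rule correlation_functionD)
    also have "\<dots> = 2 + 2 * s * \<Phi> x"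
      using correlation_functionD(2,3)[OF assms] that
      by (simp add: quad_form_def numeral_2_eq_2 algebra_simps)
    finally show ?thesis .
  qed
  from this[of 1] this[of "-1"] show ?thesis by auto
qed

lemma kmat_plus_diag_mult_vec:
  assumes "v \<in> carrier_vec n" "i < n"
  shows "((kmat \<Phi> n xs + \<mu> \<cdot>\<^sub>m 1\<^sub>m n) *\<^sub>v v) $ i = (\<Sum>k<n. \<Phi> (xs i - xs k) * v $ k) + \<mu> * v $ i"
proof -
  have "((kmat \<Phi> n xs + \<mu> \<cdot>\<^sub>m 1\<^sub>m n) *\<^sub>v v) $ i
      = (\<Sum>k<n. (\<Phi> (xs i - xs k) + (if i = k then \<mu> else 0)) * v $ k)"
    using assms unfolding mult_mat_vec_def scalar_prod_def
    by (auto simp: kmat_def atLeast0LessThan intro!: sum.cong)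
  also have "\<dots> = (\<Sum>k<n. \<Phi> (xs i - xs k) * v $ k) + (\<Sum>k<n. (if i = k then \<mu> else 0) * v $ k)"
    by (simp add: distrib_right sum.distrib)
  also have "(\<Sum>k<n. (if i = k then \<mu> else 0) * v $ k) = \<mu> * v $ i"
    using assms(2) by (simp add: if_distrib[of "\<lambda>c. c * _"] cong: if_cong)
  finally show ?thesis .
qed

lemma det_kmat_plus_diag_nonzero:
  assumes psd: "\<And>a. quad_form \<Phi> n xs a \<ge> 0" and "\<mu> > 0"
  shows "Determinant.det (kmat \<Phi> n xs + \<mu> \<cdot>\<^sub>m 1\<^sub>m n) \<noteq> 0"
proof
  let ?M = "kmat \<Phi> n xs + \<mu> \<cdot>\<^sub>m 1\<^sub>m n"
  assume "Determinant.det ?M = 0"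
  then obtain v where v: "v \<in> carrier_vec n" "v \<noteq> 0\<^sub>v n" "?M *\<^sub>v v = 0\<^sub>v n"
    using det_0_iff_vec_prod_zero_field[of ?M n] by (auto simp: kmat_def)
  obtain i where "i < n" "v $ i \<noteq> 0"
    using v(1,2) by (metis vec_eq_iff carrier_vecD index_zero_vec)
  then have "0 < (\<Sum>j<n. (v $ j)\<^sup>2)"
    by (intro sum_pos2[of _ i]) auto
  then have "0 < quad_form \<Phi> n xs (\<lambda>j. v $ j) + \<mu> * (\<Sum>j<n. (v $ j)\<^sup>2)"
    using psd \<open>\<mu> > 0\<close> by (simp add: add_nonneg_pos)
  also have "\<dots> = (\<Sum>j<n. v $ j * ((\<Sum>k<n. \<Phi> (xs j - xs k) * v $ k) + \<mu> * v $ j))"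
    by (simp add: quad_form_def distrib_left sum.distrib sum_distrib_left power2_eq_square mult_ac)
  also have "\<dots> = (\<Sum>j<n. v $ j * (?M *\<^sub>v v) $ j)"
    by (intro sum.cong refl) (simp only: kmat_plus_diag_mult_vec[OF v(1)] lessThan_iff)
  also have "\<dots> = 0"
    using v(3) by simp
  finally show False by simp
qed

lemma post_var_factor_eq_kriging_weights:
  assumes "\<And>a. quad_form \<Phi> n xs a \<ge> 0" and "\<mu> > 0"
  obtains u where "\<And>i. i < n \<Longrightarrow> (\<Sum>k<n. \<Phi> (xs i - xs k) * u k) + \<mu> * u i = \<Phi> (x - xs i)"
    and "post_var_factor \<Phi> \<mu> n xs x = \<Phi> 0 - (\<Sum>i<n. \<Phi> (x - xs i) * u i)"
proof -
  let ?M = "kmat \<Phi> n xs + \<mu> \<cdot>\<^sub>m 1\<^sub>m n"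
  let ?r = "kvec \<Phi> n xs x"
  have M: "?M \<in> carrier_mat n n" and r: "?r \<in> carrier_vec n"
    by (auto simp: kmat_def kvec_def)
  have "?M \<in> Units (ring_mat TYPE(real) n ())"
    using det_non_zero_imp_unit[OF M det_kmat_plus_diag_nonzero[OF assms]] .
  then obtain B where B: "mat_inverse ?M = Some B"
    using mat_inverse(1)[OF M, of "()"] by (cases "mat_inverse ?M") auto
  have "?M * B = 1\<^sub>m n" and "B \<in> carrier_mat n n"
    using mat_inverse(2)[OF M B] by auto
  define u where "u = B *\<^sub>v ?r"
  have u: "u \<in> carrier_vec n" and Mu: "?M *\<^sub>v u = ?r"
    using M r \<open>?M * B = 1\<^sub>m n\<close> \<open>B \<in> carrier_mat n n\<close> unfolding u_def
    by (auto, metis assoc_mult_mat_vec one_mult_mat_vec)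
  show thesis
  proof
    show "(\<Sum>k<n. \<Phi> (xs i - xs k) * u $ k) + \<mu> * u $ i = \<Phi> (x - xs i)" if "i < n" for i
      using kmat_plus_diag_mult_vec[OF u that, of \<Phi> xs \<mu>] Mu that by (simp add: kvec_def)
    show "post_var_factor \<Phi> \<mu> n xs x = \<Phi> 0 - (\<Sum>i<n. \<Phi> (x - xs i) * u $ i)"
      unfolding post_var_factor_def B option.sel u_def[symmetric]
      using u by (simp add: scalar_prod_def kvec_def atLeast0LessThan)
  qed
qed

text \<open>\<open>E (Z x - \<Sum>i. w i * Z (xs i))\<^sup>2\<close> for a process \<open>Z\<close> with covariance \<open>\<Phi>\<close>.\<close>
definition pred_mse :: "('a::euclidean_space \<Rightarrow> real) \<Rightarrow> nat \<Rightarrow> (nat \<Rightarrow> 'a) \<Rightarrow> 'a \<Rightarrow> (nat \<Rightarrow> real) \<Rightarrow> real" where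
  "pred_mse \<Phi> n xs x w = \<Phi> 0 - 2 * (\<Sum>i<n. w i * \<Phi> (x - xs i)) + quad_form \<Phi> n xs w"

lemma pred_mse_eq_quad_form:
  assumes "\<And>h. \<Phi> (- h) = \<Phi> h"
  shows "pred_mse \<Phi> n xs x w = quad_form \<Phi> (Suc n) (case_nat x xs) (case_nat 1 (\<lambda>i. - w i))"
proof -
  have "\<Phi> (xs i - x) = \<Phi> (x - xs i)" for i
    by (metis assms minus_diff_eq)
  then show ?thesis
    unfolding pred_mse_def quad_form_def sum.lessThan_Suc_shift
    by (simp add: sum.distrib sum_distrib_left sum_negf sum_subtractf algebra_simps)
qed

lemma post_var_factor_minimal:
  assumes sym: "\<And>h. \<Phi> (- h) = \<Phi> h" and psd: "\<And>a. quad_form \<Phi> n xs a \<ge> 0" and "\<mu> > 0"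
  obtains u where "post_var_factor \<Phi> \<mu> n xs x = pred_mse \<Phi> n xs x u + \<mu> * (\<Sum>i<n. (u i)\<^sup>2)"
    and "\<And>w. post_var_factor \<Phi> \<mu> n xs x \<le> pred_mse \<Phi> n xs x w + \<mu> * (\<Sum>i<n. (w i)\<^sup>2)"
proof -
  obtain u where eq: "\<And>i. i < n \<Longrightarrow> (\<Sum>k<n. \<Phi> (xs i - xs k) * u k) + \<mu> * u i = \<Phi> (x - xs i)"
    and pvf: "post_var_factor \<Phi> \<mu> n xs x = \<Phi> 0 - (\<Sum>i<n. \<Phi> (x - xs i) * u i)"
    using post_var_factor_eq_kriging_weights[OF psd \<open>\<mu> > 0\<close>, of x] by blast
  \<comment> \<open>the bilinear form of \<open>R + \<mu> I\<close>; completing the square shows that the error at \<open>w\<close>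
     exceeds the one at \<open>u\<close> by \<open>B (w - u) (w - u)\<close>\<close>
  define B where "B a b = (\<Sum>i<n. \<Sum>k<n. a i * b k * \<Phi> (xs i - xs k)) + \<mu> * (\<Sum>i<n. a i * b i)"
    for a b :: "nat \<Rightarrow> real"
  have B_sym: "B a b = B b a" for a b
  proof -
    have "(\<Sum>i<n. \<Sum>k<n. a i * b k * \<Phi> (xs i - xs k)) = (\<Sum>k<n. \<Sum>i<n. a i * b k * \<Phi> (xs k - xs i))"
      by (subst sum.swap) (metis (no_types, lifting) sym minus_diff_eq sum.cong)
    then show ?thesis
      by (simp add: B_def mult_ac)
  qed
  have B_diag: "B a a = quad_form \<Phi> n xs a + \<mu> * (\<Sum>i<n. (a i)\<^sup>2)" for a
    by (simp add: B_def quad_form_def power2_eq_square)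
  have B_u: "B a u = (\<Sum>i<n. a i * \<Phi> (x - xs i))" for a
  proof -
    have "B a u = (\<Sum>i<n. a i * ((\<Sum>k<n. \<Phi> (xs i - xs k) * u k) + \<mu> * u i))"
      by (simp add: B_def distrib_left sum.distrib sum_distrib_left mult_ac)
    also have "\<dots> = (\<Sum>i<n. a i * \<Phi> (x - xs i))"
      using eq by simp
    finally show ?thesis .
  qed
  have mse: "pred_mse \<Phi> n xs x a + \<mu> * (\<Sum>i<n. (a i)\<^sup>2) = \<Phi> 0 - 2 * B a u + B a a" for a
    by (simp add: pred_mse_def B_diag B_u)
  show thesis
  proof
    show "post_var_factor \<Phi> \<mu> n xs x = pred_mse \<Phi> n xs x u + \<mu> * (\<Sum>i<n. (u i)\<^sup>2)"
      using B_u[of u] by (simp add: mse pvf mult.commute)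
    fix w
    have "B (\<lambda>i. w i - u i) (\<lambda>i. w i - u i) = B w w - 2 * B w u + B u u"
      using B_sym[of u w] by (simp add: B_def algebra_simps sum_subtractf sum.distrib sum_distrib_left)
    moreover have "B (\<lambda>i. w i - u i) (\<lambda>i. w i - u i) \<ge> 0"
      using psd \<open>\<mu> > 0\<close> by (simp add: B_diag sum_nonneg)
    ultimately show "post_var_factor \<Phi> \<mu> n xs x \<le> pred_mse \<Phi> n xs x w + \<mu> * (\<Sum>i<n. (w i)\<^sup>2)"
      using B_u[of u] by (simp add: mse pvf mult.commute)
  qed
qed

lemma post_var_factor_le_scaled:
  assumes \<Psi>: "correlation_function \<Psi>" and K: "correlation_function K" and "\<mu> > 0" "A \<ge> 1"
    and le: "\<And>m p a. quad_form K m p a \<le> A * quad_form \<Psi> m p a"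
  shows "post_var_factor K \<mu> n xs x \<le> A * post_var_factor \<Psi> \<mu> n xs x"
proof -
  obtain u where u: "post_var_factor \<Psi> \<mu> n xs x = pred_mse \<Psi> n xs x u + \<mu> * (\<Sum>i<n. (u i)\<^sup>2)"
    using post_var_factor_minimal[OF correlation_functionD(3,4)[OF \<Psi>] \<open>\<mu> > 0\<close>] by blast
  have "post_var_factor K \<mu> n xs x \<le> pred_mse K n xs x u + \<mu> * (\<Sum>i<n. (u i)\<^sup>2)"
    using post_var_factor_minimal[OF correlation_functionD(3,4)[OF K] \<open>\<mu> > 0\<close>] by blast
  moreover have "pred_mse K n xs x u \<le> A * pred_mse \<Psi> n xs x u"
    using le by (simp add: pred_mse_eq_quad_form correlation_functionD(3) \<Psi> K)
  moreover have "\<mu> * (\<Sum>i<n. (u i)\<^sup>2) \<le> A * (\<mu> * (\<Sum>i<n. (u i)\<^sup>2))"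
    using mult_right_mono[OF \<open>A \<ge> 1\<close>, of "\<mu> * (\<Sum>i<n. (u i)\<^sup>2)"] \<open>\<mu> > 0\<close> by (simp add: sum_nonneg)
  ultimately show ?thesis
    using u by (simp add: distrib_left)
qed

section \<open>Gaussian windows\<close>

lemma integral_cis_std_gaussian:
  shows "integrable lborel (\<lambda>s. cis (v * s) * complex_of_real (exp (- s\<^sup>2 / 2)))"
    and "(\<integral>s. cis (v * s) * complex_of_real (exp (- s\<^sup>2 / 2)) \<partial>lborel)
           = complex_of_real (sqrt (2 * pi) * exp (- v\<^sup>2 / 2))"
proof -
  have "integrable lborel (\<lambda>s. sqrt (2 * pi) * std_normal_density s)"
    by auto
  then have "integrable lborel (\<lambda>s. complex_of_real (exp (- s\<^sup>2 / 2)))"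
    by (simp add: std_normal_density_def)
  then show "integrable lborel (\<lambda>s. cis (v * s) * complex_of_real (exp (- s\<^sup>2 / 2)))"
    by (rule Bochner_Integration.integrable_bound)
      (auto simp: norm_mult intro!: borel_measurable_continuous_onI continuous_intros)
  have "complex_of_real (exp (- v\<^sup>2 / 2)) = char std_normal_distribution v"
    by (simp add: char_std_normal_distribution)
  also have "\<dots> = (\<integral>s. std_normal_density s *\<^sub>R iexp (v * s) \<partial>lborel)"
    unfolding char_def by (subst integral_density) auto
  also have "\<dots> = (\<integral>s. complex_of_real (1 / sqrt (2 * pi)) *
                     (cis (v * s) * complex_of_real (exp (- s\<^sup>2 / 2))) \<partial>lborel)"
    by (intro Bochner_Integration.integral_cong refl)
      (auto simp: std_normal_density_def scaleR_conv_of_real cis_conv_exp mult_ac)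
  finally show "(\<integral>s. cis (v * s) * complex_of_real (exp (- s\<^sup>2 / 2)) \<partial>lborel)
      = complex_of_real (sqrt (2 * pi) * exp (- v\<^sup>2 / 2))"
    by (simp add: field_simps)
qed

lemma integral_cis_gaussian:
  fixes c :: real
  assumes "c > 0"
  shows "integrable lborel (\<lambda>s. cis (v * s) * complex_of_real (exp (- (c * s)\<^sup>2 / 2)))"
    and "(\<integral>s. cis (v * s) * complex_of_real (exp (- (c * s)\<^sup>2 / 2)) \<partial>lborel)
           = complex_of_real (sqrt (2 * pi) / c * exp (- (v / c)\<^sup>2 / 2))"
proof -
  let ?h = "\<lambda>s. cis (v * s) * complex_of_real (exp (- (c * s)\<^sup>2 / 2))"
  have rescaled: "?h (0 + (1 / c) * r) = cis ((v / c) * r) * complex_of_real (exp (- r\<^sup>2 / 2))" for r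
    using assms by (simp add: field_simps)
  show "integrable lborel ?h"
    using integral_cis_std_gaussian(1)[of "v / c"] lborel_integrable_real_affine_iff[of "1 / c" ?h 0]
      assms by (simp only: rescaled) simp
  have "(\<integral>s. ?h s \<partial>lborel) = \<bar>1 / c\<bar> *\<^sub>R (\<integral>r. ?h (0 + (1 / c) * r) \<partial>lborel)"
    using assms by (intro lborel_integral_real_affine) simp
  also have "\<dots> = (1 / c) *\<^sub>R complex_of_real (sqrt (2 * pi) * exp (- (v / c)\<^sup>2 / 2))"
    using assms by (simp only: rescaled integral_cis_std_gaussian(2)) simp
  finally show "(\<integral>s. ?h s \<partial>lborel) = complex_of_real (sqrt (2 * pi) / c * exp (- (v / c)\<^sup>2 / 2))"
    by (simp add: scaleR_conv_of_real)
qed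

lemma inner_sum_Basis_scaleR: "b \<in> Basis \<Longrightarrow> (\<Sum>b'\<in>Basis. g b' *\<^sub>R b') \<bullet> (b :: 'a::euclidean_space) = g b"
  by (simp add: inner_sum_left inner_Basis if_distrib sum.delta cong: if_cong)

lemma integral_prod_Basis:
  fixes f :: "'a::euclidean_space \<Rightarrow> real \<Rightarrow> 'b::{real_normed_field,banach,second_countable_topology}"
  assumes f: "\<And>b. b \<in> Basis \<Longrightarrow> integrable lborel (f b)"
  shows "integrable lborel (\<lambda>x::'a. \<Prod>b\<in>Basis. f b (x \<bullet> b))"
    and "(\<integral>x. (\<Prod>b\<in>Basis. f b (x \<bullet> b)) \<partial>lborel) = (\<Prod>b\<in>Basis. \<integral>s. f b s \<partial>lborel)"
proof -
  interpret P: product_sigma_finite "\<lambda>_::'a. lborel :: real measure" by standard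
  have [measurable]: "\<And>b. b \<in> Basis \<Longrightarrow> f b \<in> borel_measurable borel"
    using f[THEN borel_measurable_integrable] by simp
  have F: "(\<lambda>x::'a. \<Prod>b\<in>Basis. f b (x \<bullet> b)) \<in> borel_measurable borel"
    by (intro borel_measurable_prod) (auto intro: measurable_compose borel_measurable_inner)
  have T[measurable]: "(\<lambda>g. \<Sum>b\<in>Basis. g b *\<^sub>R b) \<in> (\<Pi>\<^sub>M b\<in>Basis. (lborel :: real measure)) \<rightarrow>\<^sub>M (borel :: 'a measure)"
    by measurable
  have coord: "(\<lambda>g. \<Prod>b\<in>Basis. f b ((\<Sum>b'\<in>Basis. g b' *\<^sub>R b') \<bullet> b)) = (\<lambda>g. \<Prod>b\<in>Basis. f b (g b))"
    by (intro ext prod.cong refl) (simp add: inner_sum_Basis_scaleR)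
  show "integrable lborel (\<lambda>x::'a. \<Prod>b\<in>Basis. f b (x \<bullet> b))"
    using P.product_integrable_prod[of Basis f] f
    by (subst lborel_eq, subst integrable_distr_eq[OF T F]) (simp add: coord)
  show "(\<integral>x. (\<Prod>b\<in>Basis. f b (x \<bullet> b)) \<partial>lborel) = (\<Prod>b\<in>Basis. \<integral>s. f b s \<partial>lborel)"
    using P.product_integral_prod[of Basis f] f
    by (subst lborel_eq, subst integral_distr[OF T F]) (simp add: coord)
qed

text \<open>\<open>gauss_window 1\<close> is \<open>(2 pi)^(d/2)\<close> times the standard normal density on \<open>R^d\<close>.\<close>
definition gauss_window :: "real \<Rightarrow> 'a::euclidean_space \<Rightarrow> real" where
  "gauss_window c \<omega> = (\<Prod>b\<in>Basis. exp (- (c * (\<omega> \<bullet> b))\<^sup>2 / 2))"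

lemma gauss_window_pos: "gauss_window c \<omega> > 0"
  unfolding gauss_window_def by (intro prod_pos) auto

lemma gauss_window_le_1: "gauss_window c \<omega> \<le> 1"
  unfolding gauss_window_def by (intro prod_le_1) auto

lemma gauss_window_0 [simp]: "gauss_window c 0 = 1"
  by (simp add: gauss_window_def)

lemma gauss_window_scaleR: "gauss_window c (a *\<^sub>R \<omega>) = gauss_window (c * a) \<omega>"
  by (simp add: gauss_window_def mult.assoc)

lemma continuous_on_gauss_window: "continuous_on UNIV (gauss_window c)"
  unfolding gauss_window_def[abs_def] by (intro continuous_intros) auto

lemma borel_measurable_gauss_window [measurable]: "gauss_window c \<in> borel_measurable borel"
  using continuous_on_gauss_window by (rule borel_measurable_continuous_onI)

lemma cis_sum: "finite A \<Longrightarrow> cis (\<Sum>i\<in>A. f i) = (\<Prod>i\<in>A. cis (f i))"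
  by (induction A rule: finite_induct) (auto simp: cis_mult[symmetric])

lemma gauss_window_cos_integral:
  fixes v :: "'a::euclidean_space"
  assumes "c > 0"
  shows "integrable lborel (\<lambda>\<omega>. cos (v \<bullet> \<omega>) * gauss_window c \<omega>)"
    and "(\<integral>\<omega>. cos (v \<bullet> \<omega>) * gauss_window c \<omega> \<partial>lborel)
           = (sqrt (2 * pi) / c) ^ DIM('a) * gauss_window (1 / c) v"
proof -
  let ?f = "\<lambda>b s. cis ((v \<bullet> b) * s) * complex_of_real (exp (- (c * s)\<^sup>2 / 2))"
  have f: "integrable lborel (?f b)" for b
    using assms by (rule integral_cis_gaussian(1))
  have prod_eq: "(\<Prod>b\<in>Basis. ?f b (\<omega> \<bullet> b)) = cis (v \<bullet> \<omega>) * complex_of_real (gauss_window c \<omega>)"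
    for \<omega>
  proof -
    have "(\<Prod>b\<in>Basis. cis ((v \<bullet> b) * (\<omega> \<bullet> b))) = cis (v \<bullet> \<omega>)"
      by (simp only: cis_sum[OF finite_Basis, symmetric] euclidean_inner[of v \<omega>])
    then show ?thesis
      by (simp add: gauss_window_def prod.distrib)
  qed
  have I: "integrable lborel (\<lambda>\<omega>::'a. cis (v \<bullet> \<omega>) * complex_of_real (gauss_window c \<omega>))"
    using integral_prod_Basis(1)[of ?f, OF f] unfolding prod_eq .
  show "integrable lborel (\<lambda>\<omega>. cos (v \<bullet> \<omega>) * gauss_window c \<omega>)"
    using integrable_Re[OF I] by simp
  have "(\<integral>\<omega>. cos (v \<bullet> \<omega>) * gauss_window c \<omega> \<partial>lborel)
      = Re (\<integral>\<omega>. cis (v \<bullet> \<omega>) * complex_of_real (gauss_window c \<omega>) \<partial>lborel)"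
    using integral_Re[OF I] by simp
  also have "\<dots> = Re (\<Prod>b\<in>(Basis::'a set). \<integral>s. ?f b s \<partial>lborel)"
    using integral_prod_Basis(2)[of ?f, OF f] unfolding prod_eq by simp
  also have "\<dots> = (\<Prod>b\<in>(Basis::'a set). sqrt (2 * pi) / c * exp (- ((1 / c) * (v \<bullet> b))\<^sup>2 / 2))"
    unfolding integral_cis_gaussian(2)[OF assms] of_real_prod[symmetric] Re_complex_of_real
    by (simp add: field_simps)
  also have "\<dots> = (sqrt (2 * pi) / c) ^ DIM('a) * gauss_window (1 / c) v"
    unfolding gauss_window_def prod.distrib by simp
  finally show "(\<integral>\<omega>. cos (v \<bullet> \<omega>) * gauss_window c \<omega> \<partial>lborel)
      = (sqrt (2 * pi) / c) ^ DIM('a) * gauss_window (1 / c) v" .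
qed

lemma gauss_window_integral:
  assumes "c > 0"
  shows "integrable lborel (gauss_window c :: 'a::euclidean_space \<Rightarrow> real)"
    and "(\<integral>\<omega>. gauss_window c (\<omega> :: 'a) \<partial>lborel) = (sqrt (2 * pi) / c) ^ DIM('a)"
  using gauss_window_cos_integral[OF assms, of "0 :: 'a"] by simp_all

lemma lborel_integral_affine:
  fixes f :: "'a::euclidean_space \<Rightarrow> real"
  assumes "c > 0" and [measurable]: "f \<in> borel_measurable borel"
  shows "(\<integral>x. f x \<partial>lborel) = c ^ DIM('a) * (\<integral>u. f (t + c *\<^sub>R u) \<partial>lborel)"
proof -
  let ?T = "\<lambda>x::'a. t + c *\<^sub>R x"
  have [measurable]: "?T \<in> borel \<rightarrow>\<^sub>M borel"
    by measurable
  have "lborel = density (distr lborel borel ?T) (\<lambda>_. ennreal (c ^ DIM('a)))"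
    using lborel_affine[of c t] \<open>c > 0\<close> by simp
  then have "(\<integral>x. f x \<partial>lborel) = (\<integral>x. f x \<partial>density (distr lborel borel ?T) (\<lambda>_. ennreal (c ^ DIM('a))))"
    by (rule arg_cong)
  also have "\<dots> = (\<integral>x. c ^ DIM('a) *\<^sub>R f x \<partial>distr lborel borel ?T)"
    using \<open>c > 0\<close> by (subst integral_density) auto
  also have "\<dots> = (\<integral>u. c ^ DIM('a) *\<^sub>R f (?T u) \<partial>lborel)"
    by (subst integral_distr) auto
  finally show ?thesis
    by simp
qed

lemma gauss_window_approx_identity:
  fixes G :: "'a::euclidean_space \<Rightarrow> real"
  assumes "continuous_on UNIV G" and bounded: "\<And>x. \<bar>G x\<bar> \<le> B" and "c \<longlonglongrightarrow> 0"
  shows "(\<lambda>N. \<integral>u. G (z + c N *\<^sub>R u) * gauss_window 1 u \<partial>lborel) \<longlonglongrightarrow> sqrt (2 * pi) ^ DIM('a) * G z"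
proof -
  have [measurable]: "G \<in> borel_measurable borel"
    using assms(1) by (rule borel_measurable_continuous_onI)
  have "(\<lambda>N. \<integral>u. G (z + c N *\<^sub>R u) * gauss_window 1 u \<partial>lborel) \<longlonglongrightarrow> (\<integral>u. G z * gauss_window 1 (u::'a) \<partial>lborel)"
  proof (rule integral_dominated_convergence[where w="\<lambda>u. B * gauss_window 1 u"])
    show "(\<lambda>u. G z * gauss_window 1 (u::'a)) \<in> borel_measurable lborel"
      by measurable
    show "(\<lambda>u. G (z + c N *\<^sub>R u) * gauss_window 1 u) \<in> borel_measurable lborel" for N
      by measurable
    show "integrable lborel (\<lambda>u. B * gauss_window 1 (u::'a))"
      using gauss_window_integral(1)[of 1, where 'a='a] by simp
    show "AE u in lborel. (\<lambda>N. G (z + c N *\<^sub>R u) * gauss_window 1 u) \<longlonglongrightarrow> G z * gauss_window 1 u"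
    proof (rule AE_I2)
      fix u :: 'a
      have "(\<lambda>N. z + c N *\<^sub>R u) \<longlonglongrightarrow> z + 0 *\<^sub>R u"
        by (intro tendsto_intros assms(3))
      then have "(\<lambda>N. G (z + c N *\<^sub>R u)) \<longlonglongrightarrow> G z"
        using assms(1) by (auto intro: isCont_tendsto_compose simp: continuous_on_eq_continuous_at)
      then show "(\<lambda>N. G (z + c N *\<^sub>R u) * gauss_window 1 u) \<longlonglongrightarrow> G z * gauss_window 1 u"
        by (rule tendsto_mult_right)
    qed
    show "AE u in lborel. norm (G (z + c N *\<^sub>R u) * gauss_window 1 u) \<le> B * gauss_window 1 u" for N
    proof (rule AE_I2)
      fix u :: 'a
      show "norm (G (z + c N *\<^sub>R u) * gauss_window 1 u) \<le> B * gauss_window 1 u"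
        using mult_right_mono[OF bounded less_imp_le[OF gauss_window_pos]]
        by (simp add: abs_mult abs_of_pos[OF gauss_window_pos])
    qed
  qed
  then show ?thesis
    using gauss_window_integral(2)[of 1, where 'a='a] by (simp add: mult.commute)
qed

section \<open>Positive definiteness from the spectrum\<close>

definition cos_transform :: "('a::euclidean_space \<Rightarrow> real) \<Rightarrow> 'a \<Rightarrow> real" where
  "cos_transform G \<omega> = (\<integral>x. G x * cos (x \<bullet> \<omega>) \<partial>lborel)"

lemma integral_cos_transform_mult:
  fixes G h :: "'a::euclidean_space \<Rightarrow> real"
  assumes G: "integrable lborel G" and h: "integrable lborel h"
  shows "integrable lborel (\<lambda>\<omega>. cos_transform G \<omega> * h \<omega>)"
    and "(\<integral>\<omega>. cos_transform G \<omega> * h \<omega> \<partial>lborel) = (\<integral>x. G x * (\<integral>\<omega>. cos (x \<bullet> \<omega>) * h \<omega> \<partial>lborel) \<partial>lborel)"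
proof -
  have [measurable]: "G \<in> borel_measurable borel" "h \<in> borel_measurable borel"
    using G h by (simp_all add: borel_measurable_integrable)
  have "integrable (lborel \<Otimes>\<^sub>M lborel) (\<lambda>(x::'a, \<omega>::'a). \<bar>G x\<bar> * \<bar>h \<omega>\<bar>)"
    using G h by (intro lborel_pair.Fubini_integrable) (auto intro!: integrable_mult_left integrable_mult_right integrable_abs)
  moreover have "\<bar>G x * cos (x \<bullet> \<omega>) * h \<omega>\<bar> \<le> \<bar>G x\<bar> * \<bar>h \<omega>\<bar>" for x \<omega> :: 'a
  proof -
    have "\<bar>G x * cos (x \<bullet> \<omega>) * h \<omega>\<bar> = \<bar>G x\<bar> * \<bar>h \<omega>\<bar> * \<bar>cos (x \<bullet> \<omega>)\<bar>"
      by (simp add: abs_mult mult_ac)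
    also have "\<dots> \<le> \<bar>G x\<bar> * \<bar>h \<omega>\<bar>"
      by (rule mult_left_le) auto
    finally show ?thesis .
  qed
  ultimately have F: "integrable (lborel \<Otimes>\<^sub>M lborel) (\<lambda>(x, \<omega>). G x * cos (x \<bullet> \<omega>) * h \<omega>)"
    by (elim Bochner_Integration.integrable_bound) (auto split: prod.splits)
  show "integrable lborel (\<lambda>\<omega>. cos_transform G \<omega> * h \<omega>)"
    using lborel_pair.integrable_snd[OF F] by (simp add: cos_transform_def)
  have "(\<integral>\<omega>. cos_transform G \<omega> * h \<omega> \<partial>lborel) = (\<integral>\<omega>. \<integral>x. G x * cos (x \<bullet> \<omega>) * h \<omega> \<partial>lborel \<partial>lborel)"
    by (simp add: cos_transform_def)
  also have "\<dots> = (\<integral>x. \<integral>\<omega>. G x * cos (x \<bullet> \<omega>) * h \<omega> \<partial>lborel \<partial>lborel)"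
    using lborel_pair.Fubini_integral[OF F] by simp
  also have "\<dots> = (\<integral>x. G x * (\<integral>\<omega>. cos (x \<bullet> \<omega>) * h \<omega> \<partial>lborel) \<partial>lborel)"
    unfolding mult.assoc by (intro Bochner_Integration.integral_cong refl integral_mult_right_zero)
  finally show "(\<integral>\<omega>. cos_transform G \<omega> * h \<omega> \<partial>lborel) = (\<integral>x. G x * (\<integral>\<omega>. cos (x \<bullet> \<omega>) * h \<omega> \<partial>lborel) \<partial>lborel)" .
qed

lemma damped_inverse_cos_transform:
  fixes G :: "'a::euclidean_space \<Rightarrow> real"
  assumes G: "integrable lborel G" and c: "c > 0"
  shows "integrable lborel (\<lambda>\<omega>. cos_transform G \<omega> * (cos (z \<bullet> \<omega>) * gauss_window c \<omega>))"
    and "(\<integral>\<omega>. cos_transform G \<omega> * (cos (z \<bullet> \<omega>) * gauss_window c \<omega>) \<partial>lborel)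
       = sqrt (2 * pi) ^ DIM('a) / 2 *
         ((\<integral>u. G (z + c *\<^sub>R u) * gauss_window 1 u \<partial>lborel) + (\<integral>u. G (- z + c *\<^sub>R u) * gauss_window 1 u \<partial>lborel))"
proof -
  have [measurable]: "G \<in> borel_measurable borel"
    using G by (simp add: borel_measurable_integrable)
  note transform = integral_cos_transform_mult[OF G gauss_window_cos_integral(1)[OF c]]
  show "integrable lborel (\<lambda>\<omega>. cos_transform G \<omega> * (cos (z \<bullet> \<omega>) * gauss_window c \<omega>))"
    using transform(1) .
  let ?a = "(sqrt (2 * pi) / c) ^ DIM('a)"
  have inner: "(\<integral>\<omega>. cos (x \<bullet> \<omega>) * (cos (z \<bullet> \<omega>) * gauss_window c \<omega>) \<partial>lborel)
      = ?a / 2 * (gauss_window (1 / c) (x + - z) + gauss_window (1 / c) (x + z))" for x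
  proof -
    have "cos (x \<bullet> \<omega>) * (cos (z \<bullet> \<omega>) * gauss_window c \<omega>)
        = (cos ((x - z) \<bullet> \<omega>) * gauss_window c \<omega> + cos ((x + z) \<bullet> \<omega>) * gauss_window c \<omega>) / 2" for \<omega>
      by (simp add: cos_times_cos inner_diff_left inner_add_left algebra_simps add_divide_distrib)
    then have "(\<integral>\<omega>. cos (x \<bullet> \<omega>) * (cos (z \<bullet> \<omega>) * gauss_window c \<omega>) \<partial>lborel)
        = (\<integral>\<omega>. (cos ((x - z) \<bullet> \<omega>) * gauss_window c \<omega> + cos ((x + z) \<bullet> \<omega>) * gauss_window c \<omega>) / 2 \<partial>lborel)"
      by (simp only:)
    also have "\<dots> = ((\<integral>\<omega>. cos ((x - z) \<bullet> \<omega>) * gauss_window c \<omega> \<partial>lborel)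
           + (\<integral>\<omega>. cos ((x + z) \<bullet> \<omega>) * gauss_window c \<omega> \<partial>lborel)) / 2"
      using gauss_window_cos_integral(1)[OF c, of "x - z"] gauss_window_cos_integral(1)[OF c, of "x + z"]
      by simp
    also have "\<dots> = ?a / 2 * (gauss_window (1 / c) (x + - z) + gauss_window (1 / c) (x + z))"
      by (simp only: gauss_window_cos_integral(2)[OF c]) (simp add: algebra_simps)
    finally show ?thesis .
  qed
  have integrable_shift: "integrable lborel (\<lambda>x. G x * gauss_window (1 / c) (x + t))" for t
    using G by (rule Bochner_Integration.integrable_bound)
      (auto simp: abs_mult gauss_window_le_1 abs_of_pos[OF gauss_window_pos] intro!: mult_left_le)
  have shift: "(\<integral>x. G x * gauss_window (1 / c) (x + t) \<partial>lborel)
      = c ^ DIM('a) * (\<integral>u. G (- t + c *\<^sub>R u) * gauss_window 1 u \<partial>lborel)" for t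
    using lborel_integral_affine[OF c, of "\<lambda>x. G x * gauss_window (1 / c) (x + t)" "- t"] c
    by (simp add: gauss_window_scaleR)
  have "(\<integral>\<omega>. cos_transform G \<omega> * (cos (z \<bullet> \<omega>) * gauss_window c \<omega>) \<partial>lborel)
      = (\<integral>x. ?a / 2 * (G x * gauss_window (1 / c) (x + - z)) + ?a / 2 * (G x * gauss_window (1 / c) (x + z)) \<partial>lborel)"
    unfolding transform(2) inner by (rule Bochner_Integration.integral_cong) (simp_all add: algebra_simps)
  also have "\<dots> = ?a / 2 * (\<integral>x. G x * gauss_window (1 / c) (x + - z) \<partial>lborel)
      + ?a / 2 * (\<integral>x. G x * gauss_window (1 / c) (x + z) \<partial>lborel)"
    by (subst Bochner_Integration.integral_add[OF integrable_mult_right[OF integrable_shift[of "- z"]]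
        integrable_mult_right[OF integrable_shift[of z]]]) (simp only: integral_mult_right_zero)
  also have "\<dots> = ?a / 2 * c ^ DIM('a) *
      ((\<integral>u. G (z + c *\<^sub>R u) * gauss_window 1 u \<partial>lborel) + (\<integral>u. G (- z + c *\<^sub>R u) * gauss_window 1 u \<partial>lborel))"
    unfolding shift by (simp add: algebra_simps)
  also have "?a / 2 * c ^ DIM('a) = sqrt (2 * pi) ^ DIM('a) / 2"
    using c by (simp add: power_divide)
  finally show "(\<integral>\<omega>. cos_transform G \<omega> * (cos (z \<bullet> \<omega>) * gauss_window c \<omega>) \<partial>lborel)
       = sqrt (2 * pi) ^ DIM('a) / 2 *
         ((\<integral>u. G (z + c *\<^sub>R u) * gauss_window 1 u \<partial>lborel) + (\<integral>u. G (- z + c *\<^sub>R u) * gauss_window 1 u \<partial>lborel))" .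
qed

lemma quad_form_cos_nonneg: "quad_form (\<lambda>z. cos (z \<bullet> \<omega>)) n p a \<ge> 0"
proof -
  have "quad_form (\<lambda>z. cos (z \<bullet> \<omega>)) n p a
      = (\<Sum>j<n. \<Sum>k<n. (a j * cos (p j \<bullet> \<omega>)) * (a k * cos (p k \<bullet> \<omega>))
                       + (a j * sin (p j \<bullet> \<omega>)) * (a k * sin (p k \<bullet> \<omega>)))"
    unfolding quad_form_def by (intro sum.cong refl) (simp add: inner_diff_left cos_diff algebra_simps)
  also have "\<dots> = (\<Sum>j<n. a j * cos (p j \<bullet> \<omega>))\<^sup>2 + (\<Sum>j<n. a j * sin (p j \<bullet> \<omega>))\<^sup>2"
    by (simp add: power2_eq_square sum_product sum.distrib)
  finally show ?thesis
    by simp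
qed

lemma quad_form_integral:
  assumes "\<And>z. integrable M (f z)"
  shows "quad_form (\<lambda>z. \<integral>\<omega>. f z \<omega> \<partial>M) n p a = (\<integral>\<omega>. quad_form (\<lambda>z. f z \<omega>) n p a \<partial>M)"
  using assms by (simp add: quad_form_def integral_sum integrable_sum)

lemma quad_form_scale: "quad_form (\<lambda>z. k * G z) n p a = k * quad_form G n p a"
  by (simp add: quad_form_def sum_distrib_left mult_ac)

text \<open>The easy half of Bochner's theorem. The inverse transform of \<open>cos_transform G\<close>, damped by
  a Gaussian window of width \<open>1 / c\<close>, is positive semidefinite; as \<open>c \<rightarrow> 0\<close> it converges
  to a positive multiple of \<open>G\<close>.\<close>
lemma quad_form_nonneg_if_cos_transform_nonneg:
  fixes G :: "'a::euclidean_space \<Rightarrow> real"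
  assumes G: "integrable lborel G" and "continuous_on UNIV G" and "\<And>x. \<bar>G x\<bar> \<le> B"
    and even: "\<And>x. G (- x) = G x" and transform: "\<And>\<omega>. cos_transform G \<omega> \<ge> 0"
  shows "quad_form G n p a \<ge> 0"
proof -
  define c where "c N = inverse (real (Suc N))" for N
  have c: "c N > 0" for N
    by (simp add: c_def)
  define L where "L N z = (\<integral>\<omega>. cos_transform G \<omega> * (cos (z \<bullet> \<omega>) * gauss_window (c N) \<omega>) \<partial>lborel)" for N z
  define k :: real where "k = sqrt (2 * pi) ^ DIM('a)"
  have "quad_form (L N) n p a \<ge> 0" for N
  proof -
    have "quad_form (L N) n p a
        = (\<integral>\<omega>. quad_form (\<lambda>z. cos_transform G \<omega> * (cos (z \<bullet> \<omega>) * gauss_window (c N) \<omega>)) n p a \<partial>lborel)"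
      unfolding L_def by (rule quad_form_integral[OF damped_inverse_cos_transform(1)[OF G c]])
    also have "\<dots> = (\<integral>\<omega>. cos_transform G \<omega> * gauss_window (c N) \<omega> * quad_form (\<lambda>z. cos (z \<bullet> \<omega>)) n p a \<partial>lborel)"
      by (simp add: quad_form_def sum_distrib_left mult_ac)
    also have "\<dots> \<ge> 0"
      by (intro integral_nonneg_AE AE_I2 mult_nonneg_nonneg transform quad_form_cos_nonneg
          less_imp_le[OF gauss_window_pos])
    finally show ?thesis .
  qed
  moreover have "(\<lambda>N. L N z) \<longlonglongrightarrow> k * k * G z" for z
  proof -
    have c_lim: "c \<longlonglongrightarrow> 0"
      unfolding c_def by (rule LIMSEQ_inverse_real_of_nat)
    then have "(\<lambda>N. k / 2 * ((\<integral>u. G (z + c N *\<^sub>R u) * gauss_window 1 u \<partial>lborel)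
                           + (\<integral>u. G (- z + c N *\<^sub>R u) * gauss_window 1 u \<partial>lborel)))
        \<longlonglongrightarrow> k / 2 * (k * G z + k * G (- z))"
      unfolding k_def by (intro tendsto_intros gauss_window_approx_identity[OF assms(2,3) c_lim])
    then show ?thesis
      unfolding L_def damped_inverse_cos_transform(2)[OF G c] k_def[symmetric] even
      by (simp add: algebra_simps)
  qed
  then have "(\<lambda>N. quad_form (L N) n p a) \<longlonglongrightarrow> quad_form (\<lambda>z. k * k * G z) n p a"
    unfolding quad_form_def by (intro tendsto_intros)
  ultimately have "0 \<le> k * k * quad_form G n p a"
    by (simp add: LIMSEQ_le_const quad_form_scale)
  moreover have "k * k > 0"
    by (simp add: k_def)
  ultimately show ?thesis
    by (simp add: zero_le_mult_iff)
qed

text \<open>A non-integrable function has Bochner integral \<open>0\<close>, so its Fourier transform vanishes.\<close>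
lemma fourier_0_nonzero_imp_integrable:
  assumes "fourier f 0 \<noteq> 0"
  shows "integrable lborel f"
proof (rule ccontr)
  assume "\<not> integrable lborel f"
  then have "fourier f 0 = 0"
    by (simp add: fourier_def complex_of_real_integrable_eq not_integrable_integral_eq)
  with assms show False
    by simp
qed

lemma integrable_mult_cos:
  fixes f :: "'a::euclidean_space \<Rightarrow> real"
  assumes "integrable lborel f"
  shows "integrable lborel (\<lambda>x. f x * cos (x \<bullet> \<omega>))"
proof (rule Bochner_Integration.integrable_bound[OF assms])
  have [measurable]: "f \<in> borel_measurable borel"
    using assms by (simp add: borel_measurable_integrable)
  show "(\<lambda>x. f x * cos (x \<bullet> \<omega>)) \<in> borel_measurable lborel"
    by measurable
  show "AE x in lborel. norm (f x * cos (x \<bullet> \<omega>)) \<le> norm (f x)"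
    by (intro AE_I2) (simp add: abs_mult mult_left_le)
qed

lemma Re_fourier_eq_cos_transform:
  fixes f :: "'a::euclidean_space \<Rightarrow> real"
  assumes "integrable lborel f"
  shows "Re (fourier f \<omega>) = (2 * pi) powr (- real DIM('a) / 2) * cos_transform f \<omega>"
proof -
  have [measurable]: "f \<in> borel_measurable borel"
    using assms by (simp add: borel_measurable_integrable)
  have [measurable]: "(\<lambda>x. cis (- (x \<bullet> \<omega>))) \<in> borel_measurable borel"
    by (intro borel_measurable_continuous_onI continuous_intros)
  have "integrable lborel (\<lambda>x. complex_of_real (f x) * cis (- (x \<bullet> \<omega>)))"
  proof (rule Bochner_Integration.integrable_bound[OF assms])
    show "(\<lambda>x. complex_of_real (f x) * cis (- (x \<bullet> \<omega>))) \<in> borel_measurable lborel"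
      by measurable
  qed (simp add: norm_mult)
  from integral_Re[OF this] show ?thesis
    by (simp add: fourier_def cos_transform_def)
qed

lemma quad_form_le_if_fourier_le:
  fixes \<Psi> K :: "'a::euclidean_space \<Rightarrow> real"
  assumes \<Psi>: "correlation_function \<Psi>" "integrable lborel \<Psi>"
    and K: "correlation_function K" "integrable lborel K"
    and le: "\<And>\<omega>. Re (fourier K \<omega>) \<le> A * Re (fourier \<Psi> \<omega>)"
  shows "quad_form K n p a \<le> A * quad_form \<Psi> n p a"
proof -
  define G where "G x = A * \<Psi> x - K x" for x
  have "quad_form G n p a \<ge> 0"
  proof (rule quad_form_nonneg_if_cos_transform_nonneg)
    show "integrable lborel G"
      using \<Psi>(2) K(2) by (simp add: G_def[abs_def])
    show "continuous_on UNIV G"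
      using correlation_functionD(1)[OF \<Psi>(1)] correlation_functionD(1)[OF K(1)]
      unfolding G_def[abs_def] by (intro continuous_intros)
    show "\<bar>G x\<bar> \<le> \<bar>A\<bar> + 1" for x
      using correlation_function_abs_le_1[OF \<Psi>(1), of x] correlation_function_abs_le_1[OF K(1), of x]
      by (simp add: G_def abs_mult abs_triangle_ineq4 order_trans[OF abs_triangle_ineq4] add_mono
          mult_left_le)
    show "G (- x) = G x" for x
      by (simp add: G_def correlation_functionD(3) \<Psi>(1) K(1))
    have "cos_transform G \<omega> = A * cos_transform \<Psi> \<omega> - cos_transform K \<omega>" for \<omega>
      using integrable_mult_cos[OF \<Psi>(2)] integrable_mult_cos[OF K(2)]
      by (simp add: cos_transform_def G_def left_diff_distrib mult.assoc)
    then show "cos_transform G \<omega> \<ge> 0" for \<omega>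
      using le[of \<omega>] by (simp add: Re_fourier_eq_cos_transform \<Psi>(2) K(2))
  qed
  then show ?thesis
    by (simp add: G_def quad_form_def algebra_simps sum_subtractf sum_distrib_left)
qed

theorem lemma6:
  fixes \<Omega> :: "'a::euclidean_space set"
    and \<Psi> K :: "'a \<Rightarrow> real"
    and \<sigma> \<sigma>\<^sub>\<epsilon> m\<^sub>0 c\<^sub>1 c\<^sub>2 c\<^sub>5 c\<^sub>6 A\<^sub>0 :: real
  assumes m0: "m\<^sub>0 > real DIM('a) / 2"
    and Psi_corr: "correlation_function \<Psi>" and Psi_pd: "positive_definite_fun \<Psi>"
    and c12: "c\<^sub>1 > 0" "c\<^sub>2 > 0"
    and Psi_spec: "\<And>\<omega>. Im (fourier \<Psi> \<omega>) = 0 \<and>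
         c\<^sub>1 * (1 + (norm \<omega>)\<^sup>2) powr (- m\<^sub>0) \<le> Re (fourier \<Psi> \<omega>) \<and>
         Re (fourier \<Psi> \<omega>) \<le> c\<^sub>2 * (1 + (norm \<omega>)\<^sup>2) powr (- m\<^sub>0)"
    and sigma: "\<sigma> > 0" and sigma_eps: "\<sigma>\<^sub>\<epsilon> > 0"
    and K_corr: "correlation_function K"
    and c56: "c\<^sub>5 > 0" "c\<^sub>6 > 0"
    and K_spec: "\<And>\<omega>. Im (fourier K \<omega>) = 0 \<and>
         c\<^sub>5 * (1 + (norm \<omega>)\<^sup>2) powr (- m\<^sub>0) \<le> Re (fourier K \<omega>) \<and>
         Re (fourier K \<omega>) \<le> c\<^sub>6 * (1 + (norm \<omega>)\<^sup>2) powr (- m\<^sub>0)"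
    and A0: "A\<^sub>0 > 0" "AE \<omega> in lborel. norm (fourier K \<omega> / fourier \<Psi> \<omega>) \<le> A\<^sub>0"
    and Mercer: "\<exists>(lam :: nat \<Rightarrow> real) (\<phi> :: nat \<Rightarrow> 'a \<Rightarrow> real) (C :: real).
         L2_onb \<Omega> \<phi> \<and> (\<forall>k. lam k > 0) \<and>
         (\<forall>x\<in>\<Omega>. \<forall>y\<in>\<Omega>. (\<lambda>k. lam k * \<phi> k x * \<phi> k y) sums K (x - y)) \<and>
         (\<forall>k. AE x in lebesgue_on \<Omega>. \<bar>\<phi> k x\<bar> \<le> C)"
  shows "\<exists>c > 0. \<forall>n (xs :: nat \<Rightarrow> 'a) x. (\<forall>j<n. xs j \<in> \<Omega>) \<longrightarrow> x \<in> \<Omega> \<longrightarrow>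
           cond_var \<sigma> \<Psi> (\<sigma>\<^sub>\<epsilon>\<^sup>2 / \<sigma>\<^sup>2) n xs x \<ge>
             c * post_var_factor K (\<sigma>\<^sub>\<epsilon>\<^sup>2 / \<sigma>\<^sup>2) n xs x"
proof -
  define A where "A = max 1 (c\<^sub>6 / c\<^sub>1)"
  have "A \<ge> 1" and "\<sigma>\<^sub>\<epsilon>\<^sup>2 / \<sigma>\<^sup>2 > 0"
    using sigma sigma_eps by (simp_all add: A_def)
  have integrable: "integrable lborel \<Psi>" "integrable lborel K"
    using Psi_spec[of 0] K_spec[of 0] c12(1) c56(1)
    by (auto intro!: fourier_0_nonzero_imp_integrable)
  have "Re (fourier K \<omega>) \<le> A * Re (fourier \<Psi> \<omega>)" for \<omega>
  proof -
    let ?w = "(1 + (norm \<omega>)\<^sup>2) powr (- m\<^sub>0)"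
    have "Re (fourier K \<omega>) \<le> c\<^sub>6 / c\<^sub>1 * (c\<^sub>1 * ?w)"
      using K_spec[of \<omega>] c12(1) by simp
    also have "\<dots> \<le> A * Re (fourier \<Psi> \<omega>)"
      using Psi_spec[of \<omega>] c12(1) \<open>A \<ge> 1\<close> by (intro mult_mono) (simp_all add: A_def)
    finally show ?thesis .
  qed
  then have "post_var_factor K (\<sigma>\<^sub>\<epsilon>\<^sup>2 / \<sigma>\<^sup>2) n xs x \<le> A * post_var_factor \<Psi> (\<sigma>\<^sub>\<epsilon>\<^sup>2 / \<sigma>\<^sup>2) n xs x"
    for n xs x
    by (intro post_var_factor_le_scaled[OF Psi_corr K_corr \<open>\<sigma>\<^sub>\<epsilon>\<^sup>2 / \<sigma>\<^sup>2 > 0\<close> \<open>A \<ge> 1\<close>]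
        quad_form_le_if_fourier_le[OF Psi_corr integrable(1) K_corr integrable(2)])
  then have "\<sigma>\<^sup>2 / A * post_var_factor K (\<sigma>\<^sub>\<epsilon>\<^sup>2 / \<sigma>\<^sup>2) n xs x \<le> cond_var \<sigma> \<Psi> (\<sigma>\<^sub>\<epsilon>\<^sup>2 / \<sigma>\<^sup>2) n xs x"
    for n xs x
    using \<open>A \<ge> 1\<close> sigma by (simp add: cond_var_def field_simps)
  moreover have "\<sigma>\<^sup>2 / A > 0"
    using \<open>A \<ge> 1\<close> sigma by simp
  ultimately show ?thesis
    by blast
qed

end
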